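(* Let $n\ge1$, let $p$ be a prime and let $\ell(\mathbf{z})\in\mathbb{F}_p[\mathbf{z}]$ be a nonvanishing linear form in $n$ variables $\mathbf{z}=(z_1,\dots,z_n)$. For an $n\times n$ matrix of variables $\mathbf{X}=(\mathbf{z}\mid\mathbf{Z})$ (first column $\mathbf{z}$, remaining columns $\mathbf{Z}$) put $L(\mathbf{X})=\ell(\mathbf{z})$. Then \[ S_p(L)=\sum_{\substack{\mathbf{X}\in\mathbb{F}_p^{n\times n}\\ \det\mathbf{X}=0}}\exp\left(2\pi i\,L(\mathbf{X})/p\right)\ll p^{n^2-n}, \] where the implied constant depends only on $n$.
   Context: Here $L(\mathbf{X})\in\mathbb{F}_p$ is identified with an integer in $\{0,\dots,p-1\}$ in the exponential. *)

theory Defs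
  imports Complex_Main "Jordan_Normal_Form.Determinant"
begin

text \<open>Elements of F_p are represented by integers in {0..<p}; an n x n matrix over F_p
  is an integer n x n matrix with all entries in {0..<p}.\<close>
definition Fp_mats :: "nat \<Rightarrow> nat \<Rightarrow> int mat set" where
  "Fp_mats p n = {A \<in> carrier_mat n n. \<forall>i<n. \<forall>j<n. A $$ (i, j) \<in> {0..<int p}}"

definition singular_mod :: "nat \<Rightarrow> int mat \<Rightarrow> bool" where
  "singular_mod p A \<longleftrightarrow> det A mod int p = 0"

definition lin_L :: "nat \<Rightarrow> nat \<Rightarrow> (nat \<Rightarrow> int) \<Rightarrow> int mat \<Rightarrow> int" where
  "lin_L p n a A = (\<Sum>i<n. a i * A $$ (i, 0)) mod int p"

definition S_p :: "nat \<Rightarrow> nat \<Rightarrow> (nat \<Rightarrow> int) \<Rightarrow> complex" where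
  "S_p p n a = (\<Sum>A\<in>{A \<in> Fp_mats p n. singular_mod p A}.
      exp (2 * of_real pi * \<i> * of_int (lin_L p n a A) / of_nat p))"

end

theory Submission
  imports Defs
begin

text \<open>Group the singular matrices \<open>X = (z | Z)\<close> by their last \<open>n - 1\<close> columns \<open>Z\<close>. For fixed
  \<open>Z\<close>, \<open>det X = \<Sum>i. z\<^sub>i c\<^sub>i(Z)\<close> is linear in \<open>z\<close>, so the admissible first columns form an
  \<open>F\<^sub>p\<close>-subspace \<open>V\<^sub>Z\<close>, and the sum of \<open>e(\<ell>(z)/p)\<close> over \<open>V\<^sub>Z\<close> vanishes unless \<open>\<ell>\<close> vanishes on
  \<open>V\<^sub>Z\<close>. In that case every column of \<open>Z\<close> lies in \<open>V\<^sub>Z\<close> (a repeated column kills the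
  determinant), so \<open>\<ell>\<close> vanishes on all columns of \<open>X\<close>. As \<open>\<ell> \<noteq> 0\<close>, one coordinate of each
  such column is determined by the others, leaving at most \<open>p\<^bsup>n(n-1)\<^esup>\<close> matrices; hence
  \<open>|S\<^sub>p(L)| \<le> p\<^bsup>n\<^sup>2 - n\<^esup>\<close>.\<close>

definition addchar :: "nat \<Rightarrow> int \<Rightarrow> complex" where
  "addchar p m = exp (2 * of_real pi * \<i> * of_int m / of_nat p)"

lemma addchar_add: "addchar p (x + y) = addchar p x * addchar p y"
  unfolding addchar_def by (simp add: exp_add[symmetric] add_divide_distrib distrib_left)

lemma addchar_mult_self: "p > 0 \<Longrightarrow> addchar p (int p * k) = 1"
proof -
  assume "p > 0"
  then have "2 * of_real pi * \<i> * of_int (int p * k) / of_nat p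
      = \<i> * complex_of_real (2 * pi * real_of_int k)"
    by (simp add: field_simps)
  moreover have "cis (2 * pi * real_of_int k) = 1"
    by simp
  ultimately show ?thesis
    unfolding addchar_def by (simp add: cis_conv_exp)
qed

lemma addchar_mod: "p > 0 \<Longrightarrow> addchar p (m mod int p) = addchar p m"
  by (metis addchar_add addchar_mult_self mult_div_mod_eq mult.right_neutral add.commute)

lemma norm_addchar: "cmod (addchar p m) = 1"
  unfolding addchar_def by (simp add: norm_exp)

lemma addchar_eq_1_imp_dvd:
  assumes "p > 0" and "addchar p m = 1"
  shows "int p dvd m"
proof -
  have "2 * of_real pi * \<i> * of_int m / of_nat p = \<i> * complex_of_real (2 * pi * m / p)"
    by simp
  then have "cis (2 * pi * m / p) = 1"
    using assms(2) unfolding addchar_def by (simp only: cis_conv_exp)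
  then have "cos (2 * pi * m / p) = 1"
    by (metis cis.sel(1) one_complex.sel(1))
  then obtain x :: int where "2 * pi * m / p = real_of_int x * 2 * pi"
    using cos_one_2pi_int by meson
  then have "real_of_int m = real_of_int x * real p"
    using assms(1) pi_gt_zero by (simp add: field_simps)
  then have "m = x * int p"
    by (metis of_int_eq_iff of_int_mult of_int_of_nat_eq)
  then show ?thesis by simp
qed

lemma sum_eq_0_by_twisted_bijection:
  fixes g :: "'a \<Rightarrow> 'b::idom"
  assumes "finite F" and "\<tau> ` F \<subseteq> F" and "inj_on \<tau> F"
    and "\<And>x. x \<in> F \<Longrightarrow> g (\<tau> x) = c * g x" and "c \<noteq> 1"
  shows "sum g F = 0"
proof -
  have "sum g F = sum g (\<tau> ` F)"
    using endo_inj_surj[OF assms(1-3)] by simp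
  also have "\<dots> = sum (g \<circ> \<tau>) F"
    by (rule sum.reindex[OF assms(3)])
  also have "\<dots> = c * sum g F"
    using assms(4) by (simp add: sum_distrib_left)
  finally show ?thesis
    using assms(5) by (metis mult_cancel_right1)
qed

lemma sum_mult_mod_right:
  "(\<Sum>i\<in>I. c i * (f i mod m)) mod m = (\<Sum>i\<in>I. c i * f i) mod (m::int)"
proof -
  have "(\<Sum>i\<in>I. c i * (f i mod m)) mod m = (\<Sum>i\<in>I. c i * (f i mod m) mod m) mod m"
    by (simp add: mod_sum_eq)
  also have "\<dots> = (\<Sum>i\<in>I. c i * f i mod m) mod m"
    by (simp add: mod_mult_right_eq)
  also have "\<dots> = (\<Sum>i\<in>I. c i * f i) mod m"
    by (simp add: mod_sum_eq)
  finally show ?thesis .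
qed

lemma eq_if_dvd_diff_bounded:
  fixes x y q :: int
  assumes "x \<in> {0..<q}" and "y \<in> {0..<q}" and "q dvd x - y"
  shows "x = y"
  using assms by (metis atLeastLessThan_iff mod_eq_dvd_iff mod_pos_pos_trivial)

definition with_col0 :: "'a mat \<Rightarrow> (nat \<Rightarrow> 'a) \<Rightarrow> 'a mat" where
  "with_col0 A v = mat (dim_row A) (dim_col A) (\<lambda>(i, j). if j = 0 then v i else A $$ (i, j))"

lemma dim_with_col0 [simp]:
  "dim_row (with_col0 A v) = dim_row A" "dim_col (with_col0 A v) = dim_col A"
  unfolding with_col0_def by simp_all

lemma with_col0_carrier [simp]: "with_col0 A v \<in> carrier_mat n m \<longleftrightarrow> A \<in> carrier_mat n m"
  unfolding carrier_mat_def by simp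

lemma index_with_col0 [simp]:
  "i < dim_row A \<Longrightarrow> j < dim_col A \<Longrightarrow>
    with_col0 A v $$ (i, j) = (if j = 0 then v i else A $$ (i, j))"
  unfolding with_col0_def by simp

lemma with_col0_with_col0 [simp]: "with_col0 (with_col0 A v) w = with_col0 A w"
  by (rule eq_matI) auto

lemma with_col0_self: "with_col0 A (\<lambda>i. A $$ (i, 0)) = A"
  by (rule eq_matI) auto

lemma with_col0_eq_if_same_other_cols:
  assumes "with_col0 A (\<lambda>_. 0) = with_col0 B (\<lambda>_. 0)"
  shows "with_col0 A (\<lambda>i. B $$ (i, 0)) = B"
  by (metis assms with_col0_self with_col0_with_col0)

lemma mat_eq_if_same_col0_and_other_cols:
  assumes "with_col0 A (\<lambda>_. 0) = with_col0 B (\<lambda>_. 0)"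
    and "\<And>i. i < dim_row A \<Longrightarrow> A $$ (i, 0) = B $$ (i, 0)"
  shows "A = B"
proof -
  have "with_col0 A (\<lambda>i. A $$ (i, 0)) = with_col0 A (\<lambda>i. B $$ (i, 0))"
    using assms(2) by (intro eq_matI) auto
  then show ?thesis
    using with_col0_self with_col0_eq_if_same_other_cols[OF assms(1)] by metis
qed

lemma cofactor_with_col0: "cofactor (with_col0 A v) i 0 = cofactor A i 0"
proof -
  have "mat_delete (with_col0 A v) i 0 = mat_delete A i 0"
    unfolding mat_delete_def by (rule eq_matI) (auto simp: insert_index_def)
  then show ?thesis
    unfolding cofactor_def by simp
qed

lemma det_with_col0:
  fixes A :: "'a::comm_ring_1 mat"
  assumes "A \<in> carrier_mat n n" and "n > 0"
  shows "det (with_col0 A v) = (\<Sum>i<n. cofactor A i 0 * v i)"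
  using laplace_expansion_column[of "with_col0 A v" n 0] assms
  by (simp add: cofactor_with_col0 mult.commute)

definition lin_col :: "nat \<Rightarrow> (nat \<Rightarrow> int) \<Rightarrow> int mat \<Rightarrow> nat \<Rightarrow> int" where
  "lin_col n a A j = (\<Sum>i<n. a i * A $$ (i, j))"

definition kernel_col_mats :: "nat \<Rightarrow> nat \<Rightarrow> (nat \<Rightarrow> int) \<Rightarrow> int mat set" where
  "kernel_col_mats p n a = {A \<in> Fp_mats p n. \<forall>j<n. int p dvd lin_col n a A j}"

definition sing_fiber :: "nat \<Rightarrow> nat \<Rightarrow> int mat \<Rightarrow> int mat set" where
  "sing_fiber p n K = {A \<in> Fp_mats p n. singular_mod p A \<and> with_col0 A (\<lambda>_. 0) = K}"

lemma finite_Fp_mats: "finite (Fp_mats p n)"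
proof -
  define D where "D = {..<n} \<times> {..<n}"
  have "Fp_mats p n \<subseteq> (\<lambda>f. mat n n f) ` PiE D (\<lambda>_. {0..<int p})"
  proof
    fix A assume A: "A \<in> Fp_mats p n"
    then have "A = mat n n (restrict (\<lambda>ij. A $$ ij) D)"
      unfolding Fp_mats_def D_def by (intro eq_matI) auto
    moreover have "restrict (\<lambda>ij. A $$ ij) D \<in> PiE D (\<lambda>_. {0..<int p})"
      using A unfolding Fp_mats_def D_def by auto
    ultimately show "A \<in> (\<lambda>f. mat n n f) ` PiE D (\<lambda>_. {0..<int p})"
      by blast
  qed
  moreover have "finite (PiE D (\<lambda>_. {0..<int p}))"
    unfolding D_def by (intro finite_PiE) auto
  ultimately show ?thesis
    by (rule finite_subset[OF _ finite_imageI])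
qed

lemma coord_determined_by_lin_form:
  fixes x y a :: "nat \<Rightarrow> int"
  assumes "prime p" and "k < n" and "\<not> int p dvd a k"
    and "x k \<in> {0..<int p}" and "y k \<in> {0..<int p}"
    and "\<And>i. i < n \<Longrightarrow> i \<noteq> k \<Longrightarrow> x i = y i"
    and "int p dvd (\<Sum>i<n. a i * x i)" and "int p dvd (\<Sum>i<n. a i * y i)"
  shows "x k = y k"
proof -
  have "(\<Sum>i<n. a i * x i) - (\<Sum>i<n. a i * y i) = (\<Sum>i<n. a i * (x i - y i))"
    by (simp add: sum_subtractf right_diff_distrib)
  also have "\<dots> = a k * (x k - y k)"
    using assms(2,6) by (subst sum.remove[of _ k]) auto
  finally have "int p dvd a k * (x k - y k)"
    using assms(7,8) by (metis dvd_diff)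
  then have "int p dvd x k - y k"
    using assms(1,3) by (simp add: prime_dvd_mult_iff)
  then show ?thesis
    using assms(4,5) eq_if_dvd_diff_bounded by blast
qed

lemma card_kernel_col_mats_le:
  assumes "prime p" and "k < n" and "\<not> int p dvd a k"
  shows "card (kernel_col_mats p n a) \<le> p ^ (n * (n - 1))"
proof -
  define D where "D = ({..<n} - {k}) \<times> {..<n}"
  define f where "f = (\<lambda>A::int mat. restrict (\<lambda>ij. A $$ ij) D)"
  have "inj_on f (kernel_col_mats p n a)"
  proof (rule inj_onI)
    fix A B assume A: "A \<in> kernel_col_mats p n a" and B: "B \<in> kernel_col_mats p n a"
      and "f A = f B"
    have off_k: "A $$ (i, j) = B $$ (i, j)" if "i < n" "i \<noteq> k" "j < n" for i j
    proof -
      have "f A (i, j) = f B (i, j)"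
        using \<open>f A = f B\<close> by simp
      then show ?thesis
        using that unfolding f_def D_def by simp
    qed
    have "A $$ (k, j) = B $$ (k, j)" if "j < n" for j
      using coord_determined_by_lin_form[where a = a and x = "\<lambda>i. A $$ (i, j)"
          and y = "\<lambda>i. B $$ (i, j)", OF assms] assms(2) A B that off_k
      unfolding kernel_col_mats_def Fp_mats_def lin_col_def by auto
    with off_k show "A = B"
      using A B unfolding kernel_col_mats_def Fp_mats_def by (intro eq_matI) auto
  qed
  moreover have "f ` kernel_col_mats p n a \<subseteq> PiE D (\<lambda>_. {0..<int p})"
    unfolding f_def D_def kernel_col_mats_def Fp_mats_def
    by (auto simp: image_subset_iff restrict_PiE_iff)
  moreover have "finite D"
    unfolding D_def by simp
  ultimately have "card (kernel_col_mats p n a) \<le> card (PiE D (\<lambda>_. {0..<int p}))"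
    by (intro card_inj_on_le) (auto intro: finite_PiE)
  also have "\<dots> = p ^ (n * (n - 1))"
    using \<open>finite D\<close> assms(2) by (simp add: card_PiE D_def card_cartesian_product mult.commute)
  finally show ?thesis .
qed

lemma mem_sing_fiber_iff:
  "A \<in> sing_fiber p n K \<longleftrightarrow> A \<in> carrier_mat n n \<and> (\<forall>i<n. \<forall>j<n. A $$ (i, j) \<in> {0..<int p}) \<and>
    int p dvd det A \<and> with_col0 A (\<lambda>_. 0) = K"
  unfolding sing_fiber_def Fp_mats_def singular_mod_def by (auto simp: dvd_eq_mod_eq_0)

lemma sing_fiber_carrier: "A \<in> sing_fiber p n K \<Longrightarrow> A \<in> carrier_mat n n"
  by (simp add: mem_sing_fiber_iff)

lemma sing_fiber_add_col0:
  assumes "p > 0" and "n > 0" and A: "A \<in> sing_fiber p n K" and B: "B \<in> sing_fiber p n K"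
  shows "with_col0 A (\<lambda>i. (A $$ (i, 0) + B $$ (i, 0)) mod int p) \<in> sing_fiber p n K"
    (is "?A' \<in> _")
proof -
  have A_carrier: "A \<in> carrier_mat n n"
    using A by (rule sing_fiber_carrier)
  have B_eq: "with_col0 A (\<lambda>i. B $$ (i, 0)) = B"
    using A B by (intro with_col0_eq_if_same_other_cols) (simp add: mem_sing_fiber_iff)
  have "det ?A' mod int p = (\<Sum>i<n. cofactor A i 0 * (A $$ (i, 0) + B $$ (i, 0))) mod int p"
    by (simp add: det_with_col0[OF A_carrier \<open>n > 0\<close>] sum_mult_mod_right)
  also have "(\<Sum>i<n. cofactor A i 0 * (A $$ (i, 0) + B $$ (i, 0))) = det A + det B"
    using det_with_col0[OF A_carrier \<open>n > 0\<close>, of "\<lambda>i. A $$ (i, 0)"]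
      det_with_col0[OF A_carrier \<open>n > 0\<close>, of "\<lambda>i. B $$ (i, 0)"]
    by (simp add: with_col0_self B_eq distrib_left sum.distrib)
  finally have "det ?A' mod int p = (det A + det B) mod int p" .
  moreover have "int p dvd det A + det B"
    using A B by (simp add: mem_sing_fiber_iff)
  ultimately have "int p dvd det ?A'"
    by (simp only: dvd_eq_mod_eq_0)
  then show ?thesis
    using A \<open>p > 0\<close> by (auto simp: mem_sing_fiber_iff)
qed

lemma sing_fiber_copy_col:
  assumes A: "A \<in> sing_fiber p n K" and "0 < j" and "j < n"
  shows "with_col0 A (\<lambda>i. A $$ (i, j)) \<in> sing_fiber p n K"
    (is "?A' \<in> _")
proof -
  have A_carrier: "A \<in> carrier_mat n n"
    using A by (rule sing_fiber_carrier)
  then have "col ?A' 0 = col ?A' j"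
    using assms(2,3) by (intro eq_vecI) auto
  then have "det ?A' = 0"
    using A_carrier assms(2,3) by (intro det_identical_columns[of ?A' n 0 j]) auto
  then show ?thesis
    using A assms(3) by (auto simp: mem_sing_fiber_iff)
qed

text \<open>Translating the first column by that of \<open>A0\<close> (mod \<open>p\<close>) permutes the fiber, by linearity
  of the determinant in that column, and multiplies every term by
  \<open>addchar p (lin_col n a A0 0) \<noteq> 1\<close>.\<close>
lemma sing_fiber_sum_eq_0:
  assumes "prime p" and "n > 0" and A0: "A0 \<in> sing_fiber p n K"
    and "\<not> int p dvd lin_col n a A0 0"
  shows "(\<Sum>A\<in>sing_fiber p n K. addchar p (lin_col n a A 0)) = 0"
proof -
  define \<tau> where "\<tau> A = with_col0 A (\<lambda>i. (A $$ (i, 0) + A0 $$ (i, 0)) mod int p)" for A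
  have "p > 0"
    using assms(1) prime_gt_0_nat by blast
  show ?thesis
  proof (rule sum_eq_0_by_twisted_bijection)
    show "finite (sing_fiber p n K)"
      using finite_Fp_mats[of p n] unfolding sing_fiber_def by simp
    show "\<tau> ` sing_fiber p n K \<subseteq> sing_fiber p n K"
      using sing_fiber_add_col0[OF \<open>p > 0\<close> \<open>n > 0\<close> _ A0] unfolding \<tau>_def by blast
    show "inj_on \<tau> (sing_fiber p n K)"
    proof (rule inj_onI)
      fix A B assume A: "A \<in> sing_fiber p n K" and B: "B \<in> sing_fiber p n K" and "\<tau> A = \<tau> B"
      have dims: "dim_row A = n" "dim_col A = n" "dim_row B = n" "dim_col B = n"
        using carrier_matD[OF sing_fiber_carrier[OF A]] carrier_matD[OF sing_fiber_carrier[OF B]]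
        by simp_all
      show "A = B"
      proof (rule mat_eq_if_same_col0_and_other_cols)
        show "with_col0 A (\<lambda>_. 0) = with_col0 B (\<lambda>_. 0)"
          using A B by (simp add: mem_sing_fiber_iff)
        fix i assume "i < dim_row A"
        have "\<tau> A $$ (i, 0) = \<tau> B $$ (i, 0)"
          using \<open>\<tau> A = \<tau> B\<close> by simp
        then have "(A $$ (i, 0) + A0 $$ (i, 0)) mod int p = (B $$ (i, 0) + A0 $$ (i, 0)) mod int p"
          using \<open>i < dim_row A\<close> dims \<open>n > 0\<close> unfolding \<tau>_def by simp
        then have "int p dvd A $$ (i, 0) - B $$ (i, 0)"
          by (metis mod_eq_dvd_iff add_diff_cancel_right)
        moreover have "A $$ (i, 0) \<in> {0..<int p}" "B $$ (i, 0) \<in> {0..<int p}"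
          using A B \<open>i < dim_row A\<close> dims \<open>n > 0\<close> by (simp_all add: mem_sing_fiber_iff)
        ultimately show "A $$ (i, 0) = B $$ (i, 0)"
          using eq_if_dvd_diff_bounded by blast
      qed
    qed
    show "addchar p (lin_col n a (\<tau> A) 0)
        = addchar p (lin_col n a A0 0) * addchar p (lin_col n a A 0)"
      if A: "A \<in> sing_fiber p n K" for A
    proof -
      have "lin_col n a (\<tau> A) 0 = (\<Sum>i<n. a i * ((A $$ (i, 0) + A0 $$ (i, 0)) mod int p))"
        using A \<open>n > 0\<close> unfolding lin_col_def \<tau>_def
        by (intro sum.cong) (auto simp: mem_sing_fiber_iff)
      then have "lin_col n a (\<tau> A) 0 mod int p = (lin_col n a A0 0 + lin_col n a A 0) mod int p"
        by (simp add: sum_mult_mod_right lin_col_def distrib_left sum.distrib add.commute)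
      then show ?thesis
        using \<open>p > 0\<close> by (metis addchar_mod addchar_add)
    qed
    show "addchar p (lin_col n a A0 0) \<noteq> 1"
      using assms(4) addchar_eq_1_imp_dvd \<open>p > 0\<close> by blast
  qed
qed

lemma sing_fiber_subset_kernel_col_mats:
  assumes "\<forall>A\<in>sing_fiber p n K. int p dvd lin_col n a A 0"
  shows "sing_fiber p n K \<subseteq> kernel_col_mats p n a"
proof
  fix A assume A: "A \<in> sing_fiber p n K"
  have "int p dvd lin_col n a A j" if "j < n" for j
  proof (cases "j = 0")
    case True
    then show ?thesis
      using assms A by simp
  next
    case False
    then have "int p dvd lin_col n a (with_col0 A (\<lambda>i. A $$ (i, j))) 0"
      using assms sing_fiber_copy_col[OF A _ \<open>j < n\<close>] by blast
    moreover have "lin_col n a (with_col0 A (\<lambda>i. A $$ (i, j))) 0 = lin_col n a A j"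
      using A that unfolding lin_col_def by (intro sum.cong) (auto simp: mem_sing_fiber_iff)
    ultimately show ?thesis
      by simp
  qed
  then show "A \<in> kernel_col_mats p n a"
    using A unfolding kernel_col_mats_def sing_fiber_def by blast
qed

lemma norm_sing_fiber_sum_le:
  assumes "prime p" and "n > 0"
  shows "cmod (\<Sum>A\<in>sing_fiber p n K. addchar p (lin_col n a A 0))
    \<le> card (sing_fiber p n K \<inter> kernel_col_mats p n a)"
proof (cases "\<forall>A\<in>sing_fiber p n K. int p dvd lin_col n a A 0")
  case True
  then have "sing_fiber p n K \<inter> kernel_col_mats p n a = sing_fiber p n K"
    using sing_fiber_subset_kernel_col_mats by blast
  moreover have "cmod (\<Sum>A\<in>sing_fiber p n K. addchar p (lin_col n a A 0)) \<le> card (sing_fiber p n K)"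
    using norm_sum[of "\<lambda>A. addchar p (lin_col n a A 0)" "sing_fiber p n K"]
    by (simp add: norm_addchar)
  ultimately show ?thesis
    by simp
next
  case False
  then show ?thesis
    using sing_fiber_sum_eq_0[OF assms] by auto
qed

lemma norm_S_p_le_card_kernel_col_mats:
  assumes "prime p" and "n > 0"
  shows "cmod (S_p p n a) \<le> card (kernel_col_mats p n a)"
proof -
  define M where "M = {A \<in> Fp_mats p n. singular_mod p A}"
  define fib where "fib A = with_col0 A (\<lambda>_. 0)" for A :: "int mat"
  define G where "G = kernel_col_mats p n a"
  have "finite M"
    using finite_Fp_mats[of p n] unfolding M_def by simp
  have fiber_eq: "{A \<in> M. fib A = K} = sing_fiber p n K" for K
    unfolding M_def fib_def sing_fiber_def by auto
  have "p > 0"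
    using assms(1) prime_gt_0_nat by blast
  then have "S_p p n a = (\<Sum>A\<in>M. addchar p (lin_col n a A 0))"
    unfolding S_p_def M_def lin_L_def addchar_def[symmetric] lin_col_def[symmetric]
    by (simp add: addchar_mod)
  also have "\<dots> = (\<Sum>K\<in>fib ` M. \<Sum>A\<in>sing_fiber p n K. addchar p (lin_col n a A 0))"
    unfolding fiber_eq[symmetric] by (rule sum.group[symmetric]) (use \<open>finite M\<close> in auto)
  finally have "cmod (S_p p n a)
      \<le> (\<Sum>K\<in>fib ` M. cmod (\<Sum>A\<in>sing_fiber p n K. addchar p (lin_col n a A 0)))"
    by (simp add: norm_sum)
  also have "\<dots> \<le> (\<Sum>K\<in>fib ` M. real (card (sing_fiber p n K \<inter> G)))"
    unfolding G_def by (intro sum_mono norm_sing_fiber_sum_le[OF assms])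
  also have "\<dots> = (\<Sum>K\<in>fib ` M. \<Sum>A\<in>sing_fiber p n K. of_bool (A \<in> G))"
    using \<open>finite M\<close> by (intro sum.cong) (auto simp: fiber_eq[symmetric] sum.If_cases Int_def)
  also have "\<dots> = (\<Sum>A\<in>M. of_bool (A \<in> G))"
    unfolding fiber_eq[symmetric] by (rule sum.group) (use \<open>finite M\<close> in auto)
  also have "\<dots> = real (card (M \<inter> G))"
    using \<open>finite M\<close> by (simp add: sum.If_cases)
  also have "\<dots> \<le> real (card G)"
    using finite_Fp_mats[of p n] unfolding G_def kernel_col_mats_def
    by (intro of_nat_mono card_mono) auto
  finally show ?thesis
    unfolding G_def .
qed

theorem lemma3p4:
  fixes n :: nat
  assumes "n \<ge> 1"
  shows "\<exists>C::real. \<forall>(p::nat) (a::nat \<Rightarrow> int).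
           prime p \<longrightarrow> (\<forall>i<n. a i \<in> {0..<int p}) \<longrightarrow> (\<exists>i<n. a i \<noteq> 0) \<longrightarrow>
           cmod (S_p p n a) \<le> C * real p ^ (n^2 - n)"
proof (intro exI[of _ 1] allI impI)
  fix p :: nat and a :: "nat \<Rightarrow> int"
  assume p: "prime p" and a_range: "\<forall>i<n. a i \<in> {0..<int p}" and "\<exists>i<n. a i \<noteq> 0"
  then obtain k where "k < n" and "a k \<noteq> 0"
    by blast
  then have "\<not> int p dvd a k"
    using a_range zdvd_imp_le[of "int p" "a k"] by fastforce
  have "cmod (S_p p n a) \<le> card (kernel_col_mats p n a)"
    using norm_S_p_le_card_kernel_col_mats[OF p] assms by simp
  also have "\<dots> \<le> real (p ^ (n * (n - 1)))"
    using card_kernel_col_mats_le[where a = a, OF p \<open>k < n\<close> \<open>\<not> int p dvd a k\<close>]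
    by (simp only: of_nat_le_iff)
  also have "n * (n - 1) = n^2 - n"
    by (simp add: power2_eq_square diff_mult_distrib2)
  finally show "cmod (S_p p n a) \<le> 1 * real p ^ (n^2 - n)"
    by simp
qed

end
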